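(* Let $\mathcal{X}$ and $\mathcal{Y}$ be finite additive groups, let $n,m\ge 1$, and let $F:\mathcal{X}^n\to\mathcal{Y}^m$ be a random function (a random variable taking values in the set of all maps $\mathcal{X}^n\to\mathcal{Y}^m$). Let $\Sigma_n$ and $\Sigma_m$ be uniformly distributed random permutations of the $n$ coordinates of $\mathcal{X}^n$ and of the $m$ coordinates of $\mathcal{Y}^m$, respectively, with $\Sigma_n$, $\Sigma_m$, $F$ mutually independent, and set $\tilde F=\Sigma_m\circ F\circ\Sigma_n$. Then for every $\mathbf{x}\in\mathcal{X}^n$ and $\mathbf{y}\in\mathcal{Y}^m$, $$\Pr\{\tilde F(\mathbf{x})=\mathbf{y}\}=|\mathcal{Y}|^{-m}\,\alpha(F)(P_{\mathbf{x}},P_{\mathbf{y}}).$$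
   Context: For a sequence $\mathbf{x}\in\mathcal{X}^n$, its type $P_{\mathbf{x}}$ is the distribution on $\mathcal{X}$ given by $P_{\mathbf{x}}(a)=N(a|\mathbf{x})/n$, where $N(a|\mathbf{x})$ is the number of occurrences of $a$ in $\mathbf{x}$; $\mathcal{P}_n(\mathcal{X})$ denotes the set of types of sequences in $\mathcal{X}^n$ (similarly for $\mathcal{Y}^m$). A permutation of coordinates acts on $\mathcal{X}^n$ by permuting the entries of a sequence. For a (deterministic) map $f:\mathcal{X}^n\to\mathcal{Y}^m$, its joint spectrum is $S_{\mathcal{X}\mathcal{Y}}(f)(P,Q)=|\{\mathbf{x}\in\mathcal{X}^n: P_{\mathbf{x}}=P,\ P_{f(\mathbf{x})}=Q\}|/|\mathcal{X}|^n$. For $P\in\mathcal{P}_n(\mathcal{X})$, $Q\in\mathcal{P}_m(\mathcal{Y})$, set $\binom{n}{nP}=n!/\prod_{a\in\mathcal{X}}(nP(a))!$, $\binom{m}{mQ}=m!/\prod_{b\in\mathcal{Y}}(mQ(b))!$, and for a random map $F$ define $$\alpha(F)(P,Q)=\frac{E[S_{\mathcal{X}\mathcal{Y}}(F)(P,Q)]}{\binom{n}{nP}\binom{m}{mQ}\,|\mathcal{X}|^{-n}|\mathcal{Y}|^{-m}}.$$ *)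

theory Defs
  imports "HOL-Probability.Probability" "HOL-Combinatorics.Permutations"
begin

definition seq_type :: "'a list \<Rightarrow> 'a \<Rightarrow> real" where
  "seq_type xs a = real (count_list xs a) / real (length xs)"

definition joint_spectrum ::
  "nat \<Rightarrow> ('a::finite list \<Rightarrow> 'b list) \<Rightarrow> ('a \<Rightarrow> real) \<Rightarrow> ('b \<Rightarrow> real) \<Rightarrow> real" where
  "joint_spectrum n f P Q =
     real (card {x. length x = n \<and> seq_type x = P \<and> seq_type (f x) = Q}) / real CARD('a) ^ n"

definition type_multinomial :: "nat \<Rightarrow> ('a::finite \<Rightarrow> real) \<Rightarrow> real" where
  "type_multinomial n P = fact n / (\<Prod>a\<in>UNIV. fact (nat \<lfloor>real n * P a\<rfloor>))"

definition alpha ::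
  "nat \<Rightarrow> nat \<Rightarrow> ('a::finite list \<Rightarrow> 'b::finite list) pmf \<Rightarrow> ('a \<Rightarrow> real) \<Rightarrow> ('b \<Rightarrow> real) \<Rightarrow> real" where
  "alpha n m F P Q =
     measure_pmf.expectation F (\<lambda>f. joint_spectrum n f P Q) /
     (type_multinomial n P * type_multinomial m Q *
      (1 / real CARD('a) ^ n) * (1 / real CARD('b) ^ m))"

definition unif_perm :: "nat \<Rightarrow> (nat \<Rightarrow> nat) pmf" where
  "unif_perm n = pmf_of_set {\<sigma>. \<sigma> permutes {..<n}}"

definition permuted_random_map ::
  "nat \<Rightarrow> nat \<Rightarrow> ('a list \<Rightarrow> 'b list) pmf \<Rightarrow> ('a list \<Rightarrow> 'b list) pmf" where
  "permuted_random_map n m F =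
     do { \<sigma> \<leftarrow> unif_perm n; \<tau> \<leftarrow> unif_perm m; f \<leftarrow> F;
          return_pmf (\<lambda>x. permute_list \<tau> (f (permute_list \<sigma> x))) }"

end

theory Submission
  imports Defs "HOL-Combinatorics.Multiset_Permutations"
begin

text \<open>
  Permuting the coordinates of a fixed sequence x by a uniform permutation yields a uniform
  rearrangement of x: each rearrangement is reached by a coset of the stabiliser of x, so all
  fibres have the same size. Hence the law of the permuted random map evaluated at x is: pick
  f from F, a uniform rearrangement z of x, and output a uniform rearrangement of f z.
  The probability of seeing y is thus the expected number of rearrangements z of x with
  f z a rearrangement of y, divided by the numbers of rearrangements of x and of y. The
  numerator is the joint spectrum up to the factor |X|^n, and the rearrangement counts are
  the multinomial coefficients of the types of x and y.
\<close>

lemma map_pmf_of_set_equal_fibres: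
  assumes "finite A" "A \<noteq> {}" "\<And>b. b \<in> f ` A \<Longrightarrow> card (A \<inter> f -` {b}) = k"
  shows "map_pmf f (pmf_of_set A) = pmf_of_set (f ` A)"
proof -
  have "pmf_of_set A = pmf_of_set (\<Union>b\<in>f ` A. A \<inter> f -` {b})"
    by (rule arg_cong[where f = pmf_of_set]) blast
  also have "\<dots> = pmf_of_set (f ` A) \<bind> (\<lambda>b. pmf_of_set (A \<inter> f -` {b}))"
    using assms by (intro pmf_of_set_UN) (auto simp: disjoint_family_on_def)
  finally have "map_pmf f (pmf_of_set A)
      = pmf_of_set (f ` A) \<bind> (\<lambda>b. map_pmf f (pmf_of_set (A \<inter> f -` {b})))"
    by (simp add: map_bind_pmf)
  also have "\<dots> = pmf_of_set (f ` A) \<bind> return_pmf"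
  proof (intro bind_pmf_cong refl)
    fix b assume "b \<in> set_pmf (pmf_of_set (f ` A))"
    then have "b \<in> f ` A" using assms by simp
    then have "A \<inter> f -` {b} \<noteq> {}" "finite (A \<inter> f -` {b})" using assms(1) by auto
    then show "map_pmf f (pmf_of_set (A \<inter> f -` {b})) = return_pmf b"
      by (subst map_pmf_cong[OF refl, of _ f "\<lambda>_. b"]) auto
  qed
  finally show ?thesis by (simp add: bind_return_pmf')
qed

lemma card_permute_list_fibre:
  assumes "mset ys = mset xs"
  shows "card {\<sigma>. \<sigma> permutes {..<length xs} \<and> permute_list \<sigma> xs = ys}
       = card {\<sigma>. \<sigma> permutes {..<length xs} \<and> permute_list \<sigma> xs = xs}"
proof -
  obtain \<pi> where \<pi>: "\<pi> permutes {..<length xs}" "permute_list \<pi> xs = ys"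
    using mset_eq_permutation[OF assms] .
  have inv\<pi>: "inv \<pi> permutes {..<length xs}"
    using \<pi>(1) by (rule permutes_inv)
  have undo: "permute_list (inv \<pi>) ys = xs"
    using \<pi> inv\<pi> by (metis permute_list_compose permute_list_id permutes_inv_o(1))
  have "bij_betw (\<lambda>\<rho>. \<rho> \<circ> \<pi>) {\<sigma>. \<sigma> permutes {..<length xs} \<and> permute_list \<sigma> xs = xs}
          {\<sigma>. \<sigma> permutes {..<length xs} \<and> permute_list \<sigma> xs = ys}"
    by (rule bij_betw_byWitness[where f' = "\<lambda>\<sigma>. \<sigma> \<circ> inv \<pi>"])
       (use \<pi> inv\<pi> undo in \<open>auto simp: permutes_compose permute_list_compose comp_assoc
          permutes_inv_o[OF \<pi>(1)]\<close>)
  then show ?thesis by (rule bij_betw_same_card[symmetric])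
qed

lemma map_pmf_permute_list_unif_perm:
  "map_pmf (\<lambda>\<sigma>. permute_list \<sigma> xs) (unif_perm (length xs))
     = pmf_of_set (permutations_of_multiset (mset xs))"
proof -
  let ?S = "{\<sigma>. \<sigma> permutes {..<length xs}}"
  have image: "(\<lambda>\<sigma>. permute_list \<sigma> xs) ` ?S = permutations_of_multiset (mset xs)"
  proof (intro equalityI subsetI)
    fix ys assume "ys \<in> permutations_of_multiset (mset xs)"
    then obtain \<sigma> where "\<sigma> permutes {..<length xs}" "permute_list \<sigma> xs = ys"
      by (metis mset_eq_permutation permutations_of_multisetD)
    then show "ys \<in> (\<lambda>\<sigma>. permute_list \<sigma> xs) ` ?S" by blast
  qed (auto intro: permutations_of_multisetI)
  have "map_pmf (\<lambda>\<sigma>. permute_list \<sigma> xs) (pmf_of_set ?S)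
          = pmf_of_set ((\<lambda>\<sigma>. permute_list \<sigma> xs) ` ?S)"
  proof (rule map_pmf_of_set_equal_fibres)
    fix ys assume "ys \<in> (\<lambda>\<sigma>. permute_list \<sigma> xs) ` ?S"
    then have "mset ys = mset xs" using image permutations_of_multisetD by blast
    then show "card (?S \<inter> (\<lambda>\<sigma>. permute_list \<sigma> xs) -` {ys})
        = card {\<sigma>. \<sigma> permutes {..<length xs} \<and> permute_list \<sigma> xs = xs}"
      using card_permute_list_fibre[of ys xs] by (simp add: Int_def vimage_def)
  qed (auto simp: finite_permutations intro: permutes_id)
  then show ?thesis by (simp add: unif_perm_def image)
qed

lemma map_pmf_apply_permuted_random_map:
  assumes "\<forall>f\<in>set_pmf F. \<forall>z. length z = length x \<longrightarrow> length (f z) = m"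
  shows "map_pmf (\<lambda>g. g x) (permuted_random_map (length x) m F)
           = do { f \<leftarrow> F; z \<leftarrow> pmf_of_set (permutations_of_multiset (mset x));
                  pmf_of_set (permutations_of_multiset (mset (f z))) }"
proof -
  have "map_pmf (\<lambda>g. g x) (permuted_random_map (length x) m F)
     = do { f \<leftarrow> F; z \<leftarrow> map_pmf (\<lambda>\<sigma>. permute_list \<sigma> x) (unif_perm (length x));
            map_pmf (\<lambda>\<tau>. permute_list \<tau> (f z)) (unif_perm m) }"
    by (simp add: permuted_random_map_def map_pmf_def bind_assoc_pmf bind_return_pmf
        bind_commute_pmf[of "unif_perm m" F] bind_commute_pmf[of "unif_perm (length x)" F])
  also have "\<dots> = do { f \<leftarrow> F; z \<leftarrow> pmf_of_set (permutations_of_multiset (mset x));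
                        pmf_of_set (permutations_of_multiset (mset (f z))) }"
  proof (intro bind_pmf_cong refl)
    fix f z
    assume "f \<in> set_pmf F"
      and "z \<in> set_pmf (pmf_of_set (permutations_of_multiset (mset x)))"
    then have "length (f z) = m"
      using assms by (auto dest: permutations_of_multisetD mset_eq_length)
    then show "map_pmf (\<lambda>\<tau>. permute_list \<tau> (f z)) (unif_perm m)
               = pmf_of_set (permutations_of_multiset (mset (f z)))"
      using map_pmf_permute_list_unif_perm[of "f z"] by simp
  qed (simp add: map_pmf_permute_list_unif_perm)
  finally show ?thesis .
qed

lemma pmf_bind_pmf_of_set_permutations_of_multiset:
  assumes "finite A" "A \<noteq> {}"
  shows "pmf (pmf_of_set A \<bind> (\<lambda>z. pmf_of_set (permutations_of_multiset (g z)))) ys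
           = card {z \<in> A. g z = mset ys} / (card A * card (permutations_of_multiset (mset ys)))"
proof -
  have "pmf (pmf_of_set (permutations_of_multiset (g z))) ys
          = (if g z = mset ys then 1 / card (permutations_of_multiset (mset ys)) else 0)" for z
    by (auto simp: indicator_def dest: permutations_of_multisetD intro: permutations_of_multisetI)
  then show ?thesis
    using assms by (simp add: pmf_bind_pmf_of_set sum.If_cases Int_def)
qed

lemma length_mult_seq_type: "real (length xs) * seq_type xs a = count_list xs a"
  by (cases "xs = []") (simp_all add: seq_type_def)

lemma seq_type_eq_iff_mset:
  assumes "length xs = length ys"
  shows "seq_type xs = seq_type ys \<longleftrightarrow> mset xs = mset ys"
  using length_mult_seq_type[of xs] length_mult_seq_type[of ys] assms
  by (auto simp: fun_eq_iff multiset_eq_iff count_mset seq_type_def)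

lemma type_multinomial_seq_type:
  "type_multinomial (length xs) (seq_type (xs :: 'a::finite list))
     = card (permutations_of_multiset (mset xs))"
proof -
  let ?D = "\<Prod>a\<in>set_mset (mset xs). fact (count (mset xs) a) :: real"
  have "(\<Prod>a\<in>UNIV. fact (nat \<lfloor>real (length xs) * seq_type xs a\<rfloor>))
          = (\<Prod>a\<in>UNIV. fact (count (mset xs) a) :: real)"
    by (simp add: length_mult_seq_type count_mset)
  also have "\<dots> = ?D"
    by (rule prod.mono_neutral_right) (simp_all add: count_mset count_list_0_iff)
  finally have "type_multinomial (length xs) (seq_type xs) = fact (length xs) / ?D"
    by (simp add: type_multinomial_def)
  moreover have "card (permutations_of_multiset (mset xs)) = fact (length xs) / ?D"
    using arg_cong[OF card_permutations_of_multiset_aux[of "mset xs"], of real]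
    by (simp add: of_nat_prod eq_divide_eq)
  ultimately show ?thesis by simp
qed

lemma joint_spectrum_seq_type:
  fixes f :: "'a::finite list \<Rightarrow> 'b list"
  assumes "\<forall>z. length z = length x \<longrightarrow> length (f z) = length y"
  shows "joint_spectrum (length x) f (seq_type x) (seq_type y)
           = card {z \<in> permutations_of_multiset (mset x). mset (f z) = mset y} / CARD('a) ^ length x"
proof -
  have "length z = length x \<and> seq_type z = seq_type x \<and> seq_type (f z) = seq_type y
          \<longleftrightarrow> z \<in> permutations_of_multiset (mset x) \<and> mset (f z) = mset y" for z
    using assms seq_type_eq_iff_mset[of z x] seq_type_eq_iff_mset[of "f z" y]
    by (auto simp: permutations_of_multiset_def dest: mset_eq_length)
  then show ?thesis by (simp add: joint_spectrum_def)
qed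

theorem proposition3:
  fixes F :: "('a::{finite,group_add} list \<Rightarrow> 'b::{finite,group_add} list) pmf"
    and n m :: nat and x :: "'a list" and y :: "'b list"
  assumes "n \<ge> 1" and "m \<ge> 1"
    and "\<forall>f\<in>set_pmf F. \<forall>z. length z = n \<longrightarrow> length (f z) = m"
    and "length x = n" and "length y = m"
  shows "measure_pmf.prob (permuted_random_map n m F) {g. g x = y}
         = (1 / real CARD('b) ^ m) * alpha n m F (seq_type x) (seq_type y)"
proof -
  let ?X = "permutations_of_multiset (mset x)" and ?Y = "permutations_of_multiset (mset y)"
  let ?c = "real CARD('a) ^ n / (card ?X * card ?Y)"
  have "measure_pmf.prob (permuted_random_map n m F) {g. g x = y}
          = pmf (map_pmf (\<lambda>g. g x) (permuted_random_map n m F)) y"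
    by (simp add: pmf_map vimage_def)
  also have "\<dots> = (\<integral>f. pmf (pmf_of_set ?X \<bind>
                        (\<lambda>z. pmf_of_set (permutations_of_multiset (mset (f z))))) y \<partial>F)"
    using map_pmf_apply_permuted_random_map[of F x m] assms(3-5) by (simp add: pmf_bind)
  also have "\<dots> = (\<integral>f. joint_spectrum n f (seq_type x) (seq_type y) * ?c \<partial>F)"
  proof (intro integral_cong_AE AE_pmfI)
    fix f assume "f \<in> set_pmf F"
    then show "pmf (pmf_of_set ?X \<bind> (\<lambda>z. pmf_of_set (permutations_of_multiset (mset (f z))))) y
                 = joint_spectrum n f (seq_type x) (seq_type y) * ?c"
      using assms(3-5) joint_spectrum_seq_type[of x f y]
      by (simp add: pmf_bind_pmf_of_set_permutations_of_multiset)
  qed simp_all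
  also have "\<dots> = measure_pmf.expectation F (\<lambda>f. joint_spectrum n f (seq_type x) (seq_type y)) * ?c"
    by (rule integral_mult_left_zero)
  finally have prob: "measure_pmf.prob (permuted_random_map n m F) {g. g x = y}
      = measure_pmf.expectation F (\<lambda>f. joint_spectrum n f (seq_type x) (seq_type y)) * ?c" .
  have "type_multinomial n (seq_type x) = card ?X" "type_multinomial m (seq_type y) = card ?Y"
    using type_multinomial_seq_type[of x] type_multinomial_seq_type[of y] assms(4,5) by simp_all
  moreover have "card ?X > 0" "card ?Y > 0"
    by (simp_all add: card_gt_0_iff)
  ultimately show ?thesis
    unfolding prob by (simp add: alpha_def field_simps)
qed

end
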